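(* For every $(s_0,p_0)\in G_2$ one has $c_{G_2}\big((0,0),(s_0,p_0)\big)=\tilde k_{G_2}\big((0,0),(s_0,p_0)\big)$. *)

theory Defs
  imports "HOL-Analysis.Analysis"
begin

definition unit_disc :: "complex set" where
  "unit_disc = ball 0 1"

definition G2 :: "(complex \<times> complex) set" where
  "G2 = {(l1 + l2, l1 * l2) | l1 l2. l1 \<in> unit_disc \<and> l2 \<in> unit_disc}"

definition holomorphic2_on :: "(complex \<times> complex \<Rightarrow> complex) \<Rightarrow> (complex \<times> complex) set \<Rightarrow> bool" where
  "holomorphic2_on f U \<longleftrightarrow>
     (\<forall>z\<in>U. \<exists>a b. (f has_derivative (\<lambda>(u, v). a * u + b * v)) (at z))"

definition moebius_dist :: "complex \<Rightarrow> complex \<Rightarrow> real" where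
  "moebius_dist a b = cmod (a - b) / cmod (1 - cnj b * a)"

definition poincare_dist :: "complex \<Rightarrow> complex \<Rightarrow> real" where
  "poincare_dist a b = artanh (moebius_dist a b)"

definition carath_G2 :: "complex \<times> complex \<Rightarrow> complex \<times> complex \<Rightarrow> real" where
  "carath_G2 z w = Sup {poincare_dist (f z) (f w) | f.
      holomorphic2_on f G2 \<and> f ` G2 \<subseteq> unit_disc}"

text \<open>A holomorphic map D \<rightarrow> C^2 is a pair of holomorphic functions on D.\<close>
definition lempert_G2 :: "complex \<times> complex \<Rightarrow> complex \<times> complex \<Rightarrow> real" where
  "lempert_G2 z w = Inf {poincare_dist l m | l m. l \<in> unit_disc \<and> m \<in> unit_disc \<and>
      (\<exists>\<phi>1 \<phi>2. \<phi>1 holomorphic_on unit_disc \<and> \<phi>2 holomorphic_on unit_disc \<and>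
         (\<forall>t\<in>unit_disc. (\<phi>1 t, \<phi>2 t) \<in> G2) \<and>
         (\<phi>1 l, \<phi>2 l) = z \<and> (\<phi>1 m, \<phi>2 m) = w)}"

end

theory Submission
  imports Defs "HOL-Complex_Analysis.Complex_Analysis"
begin

(* If f : G2 -> D is holomorphic and phi : D -> G2 is an analytic disc, then f o phi is a
   holomorphic self-map of D, so by Schwarz-Pick every value in the supremum defining c is
   at most every value in the infimum defining the Lempert function. It therefore suffices to
   find one value attained in both. For |w| = 1 the function
     Phi_w(s, p) = (2 w p - s) / (2 - w s)
   of Agler and Young maps G2 into D, and for 0 <= k <= 1 the rational disc
     phi(t) = (-2 (1 - k) t / (w (1 + k t)),  t (t + k) / (w^2 (1 + k t)))
   maps D into G2 with phi(0) = (0, 0). An intermediate value argument chooses w and k so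
   that phi passes through (s0, p0) at m = w Phi_w(s0, p0); then
   p(0, m) = p(Phi_w(0, 0), Phi_w(s0, p0)) is attained by both. *)

lemma moebius_dist_eq_norm_Moebius: "moebius_dist w z = norm (Moebius_function 0 w z)"
proof -
  have "cmod (1 - cnj w * z) = cmod (cnj (1 - cnj w * z))"
    by (rule complex_mod_cnj[symmetric])
  also have "\<dots> = cmod (1 - cnj z * w)"
    by (simp add: mult.commute)
  finally show ?thesis
    unfolding moebius_dist_def Moebius_function_simple
    by (simp add: norm_divide norm_minus_commute)
qed

lemma moebius_dist_less_1: "norm w < 1 \<Longrightarrow> norm z < 1 \<Longrightarrow> moebius_dist w z < 1"
  by (simp add: moebius_dist_eq_norm_Moebius Moebius_function_norm_lt_1)

lemma moebius_dist_Schwarz_Pick: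
  assumes hol: "g holomorphic_on ball 0 1" and into: "g ` ball 0 1 \<subseteq> ball 0 1"
    and l: "norm l < 1" and m: "norm m < 1"
  shows "moebius_dist (g l) (g m) \<le> moebius_dist l m"
proof -
  define M where "M = Moebius_function 0"
  have gl: "norm (g l) < 1"
    using into l by (auto simp: image_subset_iff)
  have M_hol: "M a holomorphic_on ball 0 1" and M_into: "M a ` ball 0 1 \<subseteq> ball 0 1"
    if "norm a < 1" for a
    using that Moebius_function_holomorphic Moebius_function_norm_lt_1 by (auto simp: M_def)
  define h where "h = M (g l) \<circ> (g \<circ> M (-l))"
  have "(g \<circ> M (-l)) holomorphic_on ball 0 1"
    using l by (intro holomorphic_on_compose_gen[OF M_hol hol M_into]) auto
  moreover have "(g \<circ> M (-l)) ` ball 0 1 \<subseteq> ball 0 1"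
    using l M_into into by (auto simp: image_subset_iff)
  ultimately have "h holomorphic_on ball 0 1"
    unfolding h_def using gl by (intro holomorphic_on_compose_gen[OF _ M_hol]) auto
  moreover have "h 0 = 0"
    by (simp add: h_def M_def Moebius_function_of_zero Moebius_function_eq_zero)
  moreover have "norm (h z) < 1" if "norm z < 1" for z
    using that l gl M_into into by (fastforce simp: h_def image_subset_iff)
  moreover have "norm (M l m) < 1"
    using l m by (simp add: M_def Moebius_function_norm_lt_1)
  moreover have "h (M l m) = M (g l) (g m)"
    using l m Moebius_function_compose[of "-l" l m] by (simp add: h_def M_def)
  ultimately have "norm (M (g l) (g m)) \<le> norm (M l m)"
    using Schwarz_Lemma(1) by metis
  then show ?thesis
    by (simp add: M_def moebius_dist_eq_norm_Moebius)
qed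

lemma artanh_real_mono:
  fixes x y :: real
  assumes "-1 < x" "x \<le> y" "y < 1"
  shows "artanh x \<le> artanh y"
proof -
  have "(1 + x) * (1 - y) \<le> (1 + y) * (1 - x)"
    using assms by (simp add: algebra_simps)
  then have "(1 + x) / (1 - x) \<le> (1 + y) / (1 - y)"
    using assms by (simp add: divide_simps)
  moreover have "0 < (1 + x) / (1 - x)"
    using assms by simp
  ultimately show ?thesis
    by (simp add: artanh_def)
qed

lemma poincare_dist_Schwarz_Pick:
  assumes "g holomorphic_on unit_disc" "g ` unit_disc \<subseteq> unit_disc"
    and "l \<in> unit_disc" "m \<in> unit_disc"
  shows "poincare_dist (g l) (g m) \<le> poincare_dist l m"
proof -
  have "moebius_dist (g l) (g m) \<le> moebius_dist l m" "moebius_dist l m < 1"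
    using assms moebius_dist_Schwarz_Pick moebius_dist_less_1 by (auto simp: unit_disc_def)
  moreover have "0 \<le> moebius_dist (g l) (g m)"
    by (simp add: moebius_dist_def)
  ultimately show ?thesis
    unfolding poincare_dist_def by (intro artanh_real_mono) auto
qed

lemma holomorphic2_on_compose:
  assumes f: "holomorphic2_on f V" and S: "open S"
    and \<phi>1: "\<phi>1 holomorphic_on S" and \<phi>2: "\<phi>2 holomorphic_on S"
    and into: "\<And>t. t \<in> S \<Longrightarrow> (\<phi>1 t, \<phi>2 t) \<in> V"
  shows "(\<lambda>t. f (\<phi>1 t, \<phi>2 t)) holomorphic_on S"
  unfolding holomorphic_on_open[OF S]
proof
  fix t assume t: "t \<in> S"
  obtain d1 d2 where d1: "(\<phi>1 has_field_derivative d1) (at t)"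
    and d2: "(\<phi>2 has_field_derivative d2) (at t)"
    using \<phi>1 \<phi>2 t S holomorphic_on_open by metis
  obtain a b where ab: "(f has_derivative (\<lambda>(u, v). a * u + b * v)) (at (\<phi>1 t, \<phi>2 t))"
    using f into t unfolding holomorphic2_on_def by blast
  have "((\<lambda>t. (\<phi>1 t, \<phi>2 t)) has_derivative (\<lambda>h. (d1 * h, d2 * h))) (at t)"
    using d1 d2 unfolding has_field_derivative_def by (rule has_derivative_Pair)
  from has_derivative_compose[OF this ab]
  have "((\<lambda>t. f (\<phi>1 t, \<phi>2 t)) has_derivative (\<lambda>h. (a * d1 + b * d2) * h)) (at t)"
    by (simp add: algebra_simps)
  then show "\<exists>f'. ((\<lambda>t. f (\<phi>1 t, \<phi>2 t)) has_field_derivative f') (at t)"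
    unfolding has_field_derivative_def by blast
qed

definition carath_values :: "complex \<times> complex \<Rightarrow> complex \<times> complex \<Rightarrow> real set" where
  "carath_values z w = {poincare_dist (f z) (f w) | f.
      holomorphic2_on f G2 \<and> f ` G2 \<subseteq> unit_disc}"

definition lempert_values :: "complex \<times> complex \<Rightarrow> complex \<times> complex \<Rightarrow> real set" where
  "lempert_values z w = {poincare_dist l m | l m. l \<in> unit_disc \<and> m \<in> unit_disc \<and>
      (\<exists>\<phi>1 \<phi>2. \<phi>1 holomorphic_on unit_disc \<and> \<phi>2 holomorphic_on unit_disc \<and>
         (\<forall>t\<in>unit_disc. (\<phi>1 t, \<phi>2 t) \<in> G2) \<and>
         (\<phi>1 l, \<phi>2 l) = z \<and> (\<phi>1 m, \<phi>2 m) = w)}"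

lemma carath_values_le_lempert_values:
  assumes "c \<in> carath_values z w" "x \<in> lempert_values z w"
  shows "c \<le> x"
proof -
  obtain f where c: "c = poincare_dist (f z) (f w)"
    and f: "holomorphic2_on f G2" "f ` G2 \<subseteq> unit_disc"
    using assms(1) unfolding carath_values_def by blast
  obtain l m \<phi>1 \<phi>2 where x: "x = poincare_dist l m" and lm: "l \<in> unit_disc" "m \<in> unit_disc"
    and \<phi>: "\<phi>1 holomorphic_on unit_disc" "\<phi>2 holomorphic_on unit_disc"
      "\<forall>t\<in>unit_disc. (\<phi>1 t, \<phi>2 t) \<in> G2"
    and ends: "(\<phi>1 l, \<phi>2 l) = z" "(\<phi>1 m, \<phi>2 m) = w"
    using assms(2) unfolding lempert_values_def by blast
  have "(\<lambda>t. f (\<phi>1 t, \<phi>2 t)) holomorphic_on unit_disc"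
    using f(1) \<phi> by (intro holomorphic2_on_compose) (auto simp: unit_disc_def)
  moreover have "(\<lambda>t. f (\<phi>1 t, \<phi>2 t)) ` unit_disc \<subseteq> unit_disc"
    using f(2) \<phi>(3) by auto
  ultimately have "poincare_dist (f (\<phi>1 l, \<phi>2 l)) (f (\<phi>1 m, \<phi>2 m)) \<le> poincare_dist l m"
    by (rule poincare_dist_Schwarz_Pick[OF _ _ lm])
  then show ?thesis
    unfolding c x ends .
qed

lemma carath_G2_eq_lempert_G2_if_common_value:
  assumes "e \<in> carath_values z w" "e \<in> lempert_values z w"
  shows "carath_G2 z w = lempert_G2 z w"
proof -
  have "Sup (carath_values z w) = e"
    using assms carath_values_le_lempert_values by (intro cSup_eq_maximum) auto
  moreover have "Inf (lempert_values z w) = e"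
    using assms carath_values_le_lempert_values by (intro cInf_eq_minimum) auto
  ultimately show ?thesis
    by (simp add: carath_G2_def lempert_G2_def carath_values_def lempert_values_def)
qed

definition Phi :: "complex \<Rightarrow> complex \<times> complex \<Rightarrow> complex" where
  "Phi w z = (2 * w * snd z - fst z) / (2 - w * fst z)"

lemma G2E:
  assumes "(s, p) \<in> G2"
  obtains a b where "s = a + b" "p = a * b" "norm a < 1" "norm b < 1"
  using assms unfolding G2_def unit_disc_def by auto

lemma G2_fst_norm_less_2: "(s, p) \<in> G2 \<Longrightarrow> norm s < 2"
  by (elim G2E) (simp add: norm_triangle_lt)

lemma Phi_denominator_nonzero:
  fixes w s :: complex
  assumes "norm w \<le> 1" "norm s < 2"
  shows "2 - w * s \<noteq> 0"
proof -
  have "norm w * norm s < 2"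
    using assms mult_left_le_one_le[of "norm s" "norm w"] by simp
  then show ?thesis
    by (metis right_minus_eq norm_mult norm_numeral order_less_irrefl)
qed

lemma norm_2xy_sub_less_norm_2_sub:
  fixes x y :: complex
  assumes x: "norm x < 1" and y: "norm y < 1"
  shows "norm (2 * x * y - x - y) < norm (2 - x - y)"
proof -
  have Re_bound: "(1 - norm z ^ 2) / 2 < 1 - Re z" if "norm z < 1" for z :: complex
  proof -
    have "0 < (1 - norm z) ^ 2"
      using that by simp
    then have "(1 - norm z ^ 2) / 2 < 1 - norm z"
      by (simp add: power2_eq_square field_simps)
    then show ?thesis
      using complex_Re_le_cmod[of z] by linarith
  qed
  define \<alpha> \<beta> where "\<alpha> = 1 - norm x ^ 2" and "\<beta> = 1 - norm y ^ 2"
  have "0 < \<alpha>" "0 < \<beta>"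
    using x y by (simp_all add: \<alpha>_def \<beta>_def abs_square_less_1)
  have "\<alpha> * \<beta> / 2 < \<alpha> * (1 - Re y)"
    using mult_strict_left_mono[OF Re_bound[OF y] \<open>0 < \<alpha>\<close>] by (simp add: \<beta>_def)
  moreover have "\<alpha> * \<beta> / 2 < \<beta> * (1 - Re x)"
    using mult_strict_left_mono[OF Re_bound[OF x] \<open>0 < \<beta>\<close>] by (simp add: \<alpha>_def mult.commute)
  ultimately have "0 < \<alpha> * (1 - Re y) + \<beta> * (1 - Re x) - \<alpha> * \<beta>"
    by linarith
  also have "\<dots> = (norm (2 - x - y) ^ 2 - norm (2 * x * y - x - y) ^ 2) / 4"
    unfolding \<alpha>_def \<beta>_def cmod_power2 by (simp add: power2_eq_square algebra_simps)
  finally have "norm (2 * x * y - x - y) ^ 2 < norm (2 - x - y) ^ 2"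
    by simp
  then show ?thesis
    by (rule power2_less_imp_less) simp
qed

lemma norm_Phi_less_1:
  assumes w: "norm w = 1" and G: "(s, p) \<in> G2"
  shows "norm (Phi w (s, p)) < 1"
proof -
  obtain a b where ab: "s = a + b" "p = a * b" "norm a < 1" "norm b < 1"
    using G by (rule G2E)
  define x y where "x = w * a" and "y = w * b"
  have xy: "norm x < 1" "norm y < 1"
    using ab w by (simp_all add: x_def y_def norm_mult)
  have "w \<noteq> 0"
    using w by auto
  then have "Phi w (s, p) = (w * (2 * w * p - s)) / (w * (2 - w * s))"
    by (simp add: Phi_def)
  also have "\<dots> = (2 * x * y - x - y) / (w * (2 - x - y))"
    by (simp add: ab x_def y_def algebra_simps)
  finally have "norm (Phi w (s, p)) = norm (2 * x * y - x - y) / (norm w * norm (2 - x - y))"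
    by (simp only: norm_divide norm_mult)
  with w norm_2xy_sub_less_norm_2_sub[OF xy] show ?thesis
    by (simp add: divide_less_eq)
qed

lemma holomorphic2_on_Phi:
  assumes "norm w \<le> 1"
  shows "holomorphic2_on (Phi w) G2"
  unfolding holomorphic2_on_def
proof
  fix z assume "z \<in> G2"
  moreover obtain s p where z: "z = (s, p)"
    by fastforce
  ultimately have D: "2 - w * s \<noteq> 0"
    using assms Phi_denominator_nonzero G2_fst_norm_less_2 by blast
  have "(Phi w has_derivative
      (\<lambda>(u, v). (2 * (w\<^sup>2 * p - 1) / (2 - w * s)\<^sup>2) * u + (2 * w / (2 - w * s)) * v)) (at z)"
    unfolding Phi_def[abs_def] z using D
    by (auto intro!: derivative_eq_intros simp: fun_eq_iff divide_simps)
      (simp add: power2_eq_square algebra_simps)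
  then show "\<exists>a b. (Phi w has_derivative (\<lambda>(u, v). a * u + b * v)) (at z)"
    by (intro exI)
qed

lemma Phi_poincare_dist_in_carath_values:
  assumes "norm w = 1"
  shows "poincare_dist (Phi w z) (Phi w z') \<in> carath_values z z'"
proof -
  have "Phi w ` G2 \<subseteq> unit_disc"
    using assms norm_Phi_less_1 by (auto simp: unit_disc_def)
  with holomorphic2_on_Phi[of w] assms show ?thesis
    unfolding carath_values_def by auto
qed

lemma G2_norm_snd_less_1: "(s, p) \<in> G2 \<Longrightarrow> norm p < 1"
  by (elim G2E) (use norm_mult_less[of _ 1 _ 1] in auto)

lemma G2_norm_fst_minus_snd_cnj_less:
  assumes "(s, p) \<in> G2"
  shows "norm (s - p * cnj s) < 1 - (norm p)\<^sup>2"
proof -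
  obtain a b where ab: "s = a + b" "p = a * b" "norm a < 1" "norm b < 1"
    using assms by (rule G2E)
  define x y where "x = norm a" and "y = norm b"
  have xy: "0 \<le> x" "x < 1" "0 \<le> y" "y < 1"
    using ab by (auto simp: x_def y_def)
  have "s - p * cnj s = a * (1 - b * cnj b) + b * (1 - a * cnj a)"
    by (simp add: ab algebra_simps)
  also have "\<dots> = a * of_real (1 - y\<^sup>2) + b * of_real (1 - x\<^sup>2)"
    by (simp only: x_def y_def of_real_diff of_real_1 complex_norm_square)
  finally have "norm (s - p * cnj s)
      \<le> norm (a * of_real (1 - y\<^sup>2)) + norm (b * of_real (1 - x\<^sup>2))"
    by (simp only: norm_triangle_ineq)
  also have "\<dots> = x * (1 - y\<^sup>2) + y * (1 - x\<^sup>2)"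
    using xy by (simp only: norm_mult norm_of_real) (simp add: x_def y_def abs_of_nonneg power_le_one)
  also have "\<dots> < 1 - x\<^sup>2 * y\<^sup>2"
  proof -
    have "x * y < 1"
      using mult_strict_mono'[of x 1 y 1] xy by simp
    then have "0 < (1 - x) * (1 - y) * (1 - x * y)"
      using xy by simp
    moreover have "1 - x\<^sup>2 * y\<^sup>2 - (x * (1 - y\<^sup>2) + y * (1 - x\<^sup>2)) = (1 - x) * (1 - y) * (1 - x * y)"
      by (simp add: algebra_simps power2_eq_square)
    ultimately show ?thesis
      by linarith
  qed
  also have "\<dots> = 1 - (norm p)\<^sup>2"
    by (simp add: ab x_def y_def norm_mult power_mult_distrib)
  finally show ?thesis .
qed

lemma norm_minus_mult_cnj_ge: "(1 - norm p) * norm z \<le> norm (z - p * cnj z)"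
  using norm_triangle_ineq2[of z "p * cnj z"] by (simp add: norm_mult algebra_simps)

lemma ray_meets_level_set:
  fixes p s d :: complex
  assumes p: "norm p < 1" and d: "d \<noteq> 0" and s: "norm (s - p * cnj s) \<le> 1 - (norm p)\<^sup>2"
  obtains \<tau> :: real where "0 \<le> \<tau>"
    "norm ((s - \<tau> * d) - p * cnj (s - \<tau> * d)) = 1 - (norm p)\<^sup>2"
proof -
  define F where "F \<tau> = norm ((s - \<tau> * d) - p * cnj (s - \<tau> * d))" for \<tau> :: real
  define T where "T = (2 + norm s) / norm d"
  have "T \<ge> 0"
    by (simp add: T_def)
  have "norm (T * d) = T * norm d"
    using \<open>T \<ge> 0\<close> by (simp add: norm_mult)
  also have "\<dots> = 2 + norm s"
    using d by (simp add: T_def)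
  finally have "2 \<le> norm (s - T * d)"
    using norm_triangle_ineq2[of "T * d" s] by (simp add: norm_minus_commute)
  then have "(1 - norm p) * 2 \<le> F T"
    unfolding F_def using p
    by (meson norm_minus_mult_cnj_ge diff_ge_0_iff_ge less_imp_le mult_left_mono order_trans)
  moreover have "1 - (norm p)\<^sup>2 \<le> (1 - norm p) * 2"
    using zero_le_power2[of "1 - norm p"] by (simp add: power2_eq_square algebra_simps)
  ultimately have "F 0 \<le> 1 - (norm p)\<^sup>2" "1 - (norm p)\<^sup>2 \<le> F T"
    using s by (simp_all add: F_def)
  moreover have "continuous_on {0..T} F"
    unfolding F_def by (intro continuous_intros)
  ultimately obtain \<tau> where "0 \<le> \<tau>" "F \<tau> = 1 - (norm p)\<^sup>2"
    using IVT'[of F 0 _ T] \<open>T \<ge> 0\<close> by auto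
  then show thesis
    using that by (simp add: F_def)
qed

lemma unimodular_solution:
  assumes p: "norm p < 1" and W: "norm (W - p * cnj W) = 1 - (norm p)\<^sup>2"
  obtains w where "norm w = 1" "cnj w + w * p = W"
proof -
  define R where "R = 1 - (norm p)\<^sup>2"
  have "R > 0"
    using p by (simp add: R_def abs_square_less_1)
  have R: "complex_of_real R = 1 - p * cnj p"
    by (simp only: R_def of_real_diff of_real_1 complex_norm_square)
  define w where "w = cnj (W - p * cnj W) / R"
  have "norm (W - p * cnj W) = R"
    by (simp add: R_def W)
  then have "norm w = 1"
    using \<open>R > 0\<close> unfolding w_def norm_divide complex_mod_cnj by simp
  have "cnj w + w * p = (W - p * cnj W + cnj (W - p * cnj W) * p) / R"
    by (simp add: w_def add_divide_distrib)
  also have "\<dots> = W * (1 - p * cnj p) / R"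
    by (simp add: algebra_simps)
  also have "\<dots> = W"
    using \<open>R > 0\<close> unfolding R[symmetric] by simp
  finally show thesis
    using \<open>norm w = 1\<close> by (intro that)
qed

text \<open>For \<open>|w| = 1\<close> and \<open>k = 1 / (1 + 2\<tau>)\<close>, the identity divided by \<open>w s\<close> reads
  \<open>cnj w + w p = W\<close> with \<open>W = s - \<tau> (4p - s\<^sup>2) / s\<close>. A unimodular solution exists once
  \<open>|W - p cnj W| = 1 - |p|\<^sup>2\<close>, and membership in \<open>G2\<close> puts \<open>W\<close> below this level at
  \<open>\<tau> = 0\<close>.\<close>

lemma exists_extremal_parameters:
  assumes G: "(s, p) \<in> G2"
  obtains w k where "norm w = 1" "0 \<le> k" "k \<le> 1"
    "of_real k * (2 - w * s) * (2 * w * p - s) = w * (4 * p - s\<^sup>2)"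
proof (cases "s = 0 \<or> 4 * p - s\<^sup>2 = 0")
  case True
  then show thesis
    using that[of 1 1] that[of 1 0] by (cases "s = 0") auto
next
  case False
  define q where "q = 4 * p - s\<^sup>2"
  have p: "norm p < 1" and "norm (s - p * cnj s) \<le> 1 - (norm p)\<^sup>2"
    using G2_norm_snd_less_1[OF G] G2_norm_fst_minus_snd_cnj_less[OF G] by simp_all
  then obtain \<tau> :: real where "0 \<le> \<tau>" and
    "norm ((s - \<tau> * (q / s)) - p * cnj (s - \<tau> * (q / s))) = 1 - (norm p)\<^sup>2"
    using ray_meets_level_set[of p "q / s" s] False by (auto simp: q_def)
  then obtain w where w: "norm w = 1" "cnj w + w * p = s - \<tau> * (q / s)"
    using unimodular_solution p by blast
  have "w * cnj w = 1"
    using w(1) complex_norm_square[of w] by simp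
  then have "s + w\<^sup>2 * p * s = w * s\<^sup>2 - \<tau> * w * q"
    using arg_cong[OF w(2), of "\<lambda>z. w * s * z"] False by (simp add: field_simps power2_eq_square)
  then have E: "(2 - w * s) * (2 * w * p - s) = (1 + 2 * of_real \<tau>) * w * q"
    unfolding q_def by algebra
  define k where "k = 1 / (1 + 2 * \<tau>)"
  have "k * (1 + 2 * \<tau>) = 1"
    using \<open>0 \<le> \<tau>\<close> by (simp add: k_def)
  from arg_cong[where f = complex_of_real, OF this]
  have k: "of_real k * (1 + 2 * of_real \<tau>) = (1 :: complex)"
    by simp
  have "of_real k * (2 - w * s) * (2 * w * p - s) = (of_real k * (1 + 2 * of_real \<tau>)) * (w * q)"
    using E by (simp add: mult.assoc)
  also have "\<dots> = w * q"
    by (simp add: k)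
  finally show thesis
    using that[of w k] w(1) \<open>0 \<le> \<tau>\<close> by (simp add: k_def q_def)
qed

lemma one_add_mult_neq_0:
  fixes c t :: "'a :: real_normed_div_algebra"
  assumes "norm c \<le> 1" "norm t < 1"
  shows "1 + c * t \<noteq> 0"
proof
  assume "1 + c * t = 0"
  then have "norm (c * t) = 1"
    by (metis add_eq_0_iff norm_minus_cancel norm_one)
  moreover have "norm (c * t) < 1"
    using assms mult_left_le_one_le[of "norm t" "norm c"] by (simp add: norm_mult)
  ultimately show False
    by simp
qed

lemma norm_add_of_real_le_norm_one_add:
  fixes r :: real and u :: complex
  assumes "\<bar>r\<bar> \<le> 1" "norm u \<le> 1"
  shows "norm (u + of_real r) \<le> norm (1 + of_real r * u)"
proof -
  have "(norm (1 + of_real r * u))\<^sup>2 - (norm (u + of_real r))\<^sup>2 = (1 - r\<^sup>2) * (1 - (norm u)\<^sup>2)"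
    unfolding cmod_power2 by (simp add: power2_eq_square algebra_simps)
  moreover have "0 \<le> (1 - r\<^sup>2) * (1 - (norm u)\<^sup>2)"
    using assms by (simp add: abs_square_le_1)
  ultimately have "(norm (u + of_real r))\<^sup>2 \<le> (norm (1 + of_real r * u))\<^sup>2"
    by linarith
  then show ?thesis
    by (rule power2_le_imp_le) simp
qed

definition extremal_disc_s :: "complex \<Rightarrow> real \<Rightarrow> complex \<Rightarrow> complex" where
  "extremal_disc_s w k t = - 2 * (1 - of_real k) * t / (w * (1 + of_real k * t))"

definition extremal_disc_p :: "complex \<Rightarrow> real \<Rightarrow> complex \<Rightarrow> complex" where
  "extremal_disc_p w k t = t * (t + of_real k) / (w\<^sup>2 * (1 + of_real k * t))"

lemma extremal_disc_holomorphic: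
  assumes "w \<noteq> 0" "\<bar>k\<bar> \<le> 1"
  shows "extremal_disc_s w k holomorphic_on unit_disc" "extremal_disc_p w k holomorphic_on unit_disc"
proof -
  have "1 + of_real k * t \<noteq> 0" if "t \<in> unit_disc" for t
    using assms that one_add_mult_neq_0[of "of_real k" t] by (simp add: unit_disc_def)
  then show "extremal_disc_s w k holomorphic_on unit_disc" "extremal_disc_p w k holomorphic_on unit_disc"
    unfolding extremal_disc_s_def[abs_def] extremal_disc_p_def[abs_def] using assms
    by (auto intro!: holomorphic_intros)
qed

definition extremal_disc_root :: "complex \<Rightarrow> real \<Rightarrow> complex \<Rightarrow> complex" where
  "extremal_disc_root w r u = u * (u + of_real r) / (w * (1 + of_real r * u))"

lemma norm_extremal_disc_root_less_1:
  assumes "norm w = 1" "\<bar>r\<bar> \<le> 1" "norm u < 1"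
  shows "norm (extremal_disc_root w r u) < 1"
proof -
  have "norm (extremal_disc_root w r u) = norm u * (norm (u + of_real r) / norm (1 + of_real r * u))"
    using assms(1) by (simp add: extremal_disc_root_def norm_mult norm_divide)
  also have "\<dots> \<le> norm u"
    using assms one_add_mult_neq_0[of "of_real r" u] norm_add_of_real_le_norm_one_add[of r u]
    by (intro mult_left_le) (simp_all add: divide_le_eq_1)
  finally show ?thesis
    using assms(3) by linarith
qed

lemma extremal_disc_eq_roots:
  fixes r :: real
  assumes "w \<noteq> 0" "1 + of_real r * u \<noteq> 0" "1 - of_real r * u \<noteq> 0"
  shows "extremal_disc_s w (r\<^sup>2) (- u\<^sup>2) = extremal_disc_root w r u + extremal_disc_root w (- r) u"
    "extremal_disc_p w (r\<^sup>2) (- u\<^sup>2) = extremal_disc_root w r u * extremal_disc_root w (- r) u"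
proof -
  have den: "1 + of_real (r\<^sup>2) * - u\<^sup>2 = (1 + of_real r * u) * (1 - of_real r * u)"
    by (simp add: algebra_simps power2_eq_square)
  show "extremal_disc_s w (r\<^sup>2) (- u\<^sup>2) = extremal_disc_root w r u + extremal_disc_root w (- r) u"
    unfolding extremal_disc_s_def extremal_disc_root_def den
    using assms by (simp add: divide_simps) algebra
  show "extremal_disc_p w (r\<^sup>2) (- u\<^sup>2) = extremal_disc_root w r u * extremal_disc_root w (- r) u"
    unfolding extremal_disc_p_def extremal_disc_root_def den
    using assms by (simp add: divide_simps) algebra
qed

lemma extremal_disc_in_G2:
  assumes w: "norm w = 1" and k: "0 \<le> k" "k \<le> 1" and t: "t \<in> unit_disc"
  shows "(extremal_disc_s w k t, extremal_disc_p w k t) \<in> G2"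
proof -
  define u r where "u = csqrt (- t)" and "r = sqrt k"
  have u: "norm u < 1" and r: "\<bar>r\<bar> \<le> 1"
    using t k by (simp_all add: u_def r_def unit_disc_def real_sqrt_lt_1_iff)
  have tk: "t = - u\<^sup>2" "k = r\<^sup>2"
    using k by (simp_all add: u_def r_def)
  have "1 + of_real r * u \<noteq> 0" "1 - of_real r * u \<noteq> 0"
    using one_add_mult_neq_0[of "of_real r" u] one_add_mult_neq_0[of "- of_real r" u] u r by simp_all
  moreover have "w \<noteq> 0"
    using w by auto
  ultimately have "extremal_disc_s w k t = extremal_disc_root w r u + extremal_disc_root w (- r) u"
    "extremal_disc_p w k t = extremal_disc_root w r u * extremal_disc_root w (- r) u"
    unfolding tk by (simp_all add: extremal_disc_eq_roots)
  moreover have "norm (extremal_disc_root w r u) < 1" "norm (extremal_disc_root w (- r) u) < 1"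
    using norm_extremal_disc_root_less_1[OF w _ u] r by simp_all
  ultimately show ?thesis
    unfolding G2_def unit_disc_def by force
qed

lemma extremal_disc_through:
  assumes w: "norm w = 1" and k: "0 \<le> k" "k \<le> 1" and G: "(s, p) \<in> G2"
    and eq: "of_real k * (2 - w * s) * (2 * w * p - s) = w * (4 * p - s\<^sup>2)"
  defines "m \<equiv> w * Phi w (s, p)"
  shows "extremal_disc_s w k m = s" "extremal_disc_p w k m = p"
proof -
  have D: "2 - w * s \<noteq> 0"
    using w G Phi_denominator_nonzero G2_fst_norm_less_2 by simp
  have "norm m < 1"
    using w norm_Phi_less_1[OF w G] by (simp add: m_def norm_mult)
  then have km: "1 + of_real k * m \<noteq> 0"
    using one_add_mult_neq_0[of "of_real k" m] k by simp
  have "w \<noteq> 0"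
    using w by auto
  have m: "m * (2 - w * s) = w * (2 * w * p - s)"
    using D by (simp add: m_def Phi_def)
  have "(- 2 * (1 - of_real k) * m - s * (w * (1 + of_real k * m))) * (2 - w * s) = 0"
    using m eq by algebra
  then have "- 2 * (1 - of_real k) * m = s * (w * (1 + of_real k * m))"
    using D by simp
  then show "extremal_disc_s w k m = s"
    unfolding extremal_disc_s_def using km \<open>w \<noteq> 0\<close> by simp
  have "(m * (m + of_real k) - p * (w\<^sup>2 * (1 + of_real k * m))) * (2 - w * s)\<^sup>2 = 0"
    using m eq by algebra
  then have "m * (m + of_real k) = p * (w\<^sup>2 * (1 + of_real k * m))"
    using D by simp
  then show "extremal_disc_p w k m = p"
    unfolding extremal_disc_p_def using km \<open>w \<noteq> 0\<close> by simp
qed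

lemma extremal_disc_poincare_dist_in_lempert_values:
  assumes w: "norm w = 1" and k: "0 \<le> k" "k \<le> 1" and G: "(s, p) \<in> G2"
    and eq: "of_real k * (2 - w * s) * (2 * w * p - s) = w * (4 * p - s\<^sup>2)"
  shows "poincare_dist 0 (w * Phi w (s, p)) \<in> lempert_values (0, 0) (s, p)"
proof -
  have "w * Phi w (s, p) \<in> unit_disc" "(0::complex) \<in> unit_disc"
    using w norm_Phi_less_1[OF w G] by (simp_all add: unit_disc_def norm_mult)
  moreover have "(extremal_disc_s w k 0, extremal_disc_p w k 0) = (0, 0)"
    by (simp add: extremal_disc_s_def extremal_disc_p_def)
  ultimately show ?thesis
    unfolding lempert_values_def
    using extremal_disc_holomorphic[of w k] extremal_disc_in_G2[OF w k]
      extremal_disc_through[OF w k G eq] w k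
    by fastforce
qed

theorem mainTheorem7:
  fixes s0 p0 :: complex
  assumes "(s0, p0) \<in> G2"
  shows "carath_G2 (0, 0) (s0, p0) = lempert_G2 (0, 0) (s0, p0)"
proof -
  obtain w k where w: "norm w = 1" and k: "0 \<le> k" "k \<le> 1"
    and eq: "of_real k * (2 - w * s0) * (2 * w * p0 - s0) = w * (4 * p0 - s0\<^sup>2)"
    using exists_extremal_parameters[OF assms] .
  have "Phi w (0, 0) = 0"
    by (simp add: Phi_def)
  with w have "poincare_dist 0 (w * Phi w (s0, p0)) = poincare_dist (Phi w (0, 0)) (Phi w (s0, p0))"
    by (simp add: poincare_dist_def moebius_dist_def norm_mult)
  with Phi_poincare_dist_in_carath_values[OF w]
  have "poincare_dist 0 (w * Phi w (s0, p0)) \<in> carath_values (0, 0) (s0, p0)"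
    by simp
  moreover have "poincare_dist 0 (w * Phi w (s0, p0)) \<in> lempert_values (0, 0) (s0, p0)"
    using extremal_disc_poincare_dist_in_lempert_values[OF w k assms eq] .
  ultimately show ?thesis
    by (rule carath_G2_eq_lempert_G2_if_common_value)
qed

end
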